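(* Let $M$ be a finite-horizon MDP with an offline dataset $\mathcal D$ and dataset-induced MDP $M_{\mathcal D}$, and let $\pi$ be batch-constrained with respect to $\mathcal D$. Suppose $\max_{(s,a):\rho_\pi^{M_{\mathcal D}}(s,a)>0}\|P^{M_{\mathcal D}}(\cdot\mid s,a)-P^M(\cdot\mid s,a)\|_1\le\epsilon_P$, $\max_{(s,a):\rho_\pi^{M_{\mathcal D}}(s,a)>0}|r^{M_{\mathcal D}}(s,a)-r^M(s,a)|\le\epsilon_r$, and $\max_{s,a}\max(r^{M_{\mathcal D}}(s,a),r^M(s,a))\le r_{max}$. Then $$|\mathcal J_{M_{\mathcal D}}(\pi)-\mathcal J_M(\pi)|\le H\epsilon_r+\frac{H(H-1)r_{max}}{2}\epsilon_P.$$
   Context: $M=(\mathcal S,\mathcal A,\mathcal R,H,P^M,R^M)$ is a finite-horizon MDP with finite spaces, fixed initial state $s_0$, state space partitioned into disjoint layers $\mathcal S_h$ ($h=0,\dots,H-1$) by timestep, rewards in $[0,1]$. $\mathcal J_M(\pi)$ is the expected total reward of policy $\pi$ over $H$ steps from $s_0$. Mean reward $r^M(s,a)=\mathbb E_{r\sim R^M(\cdot\mid s,a)}[r]$. Visitation distribution of $\pi$ in an MDP: $\rho_\pi(s_0)=1/H$, $\rho_\pi(s)=\sum_{\tilde s\in\mathcal S_{h-1},\tilde a}\rho_\pi(\tilde s)\pi(\tilde a\mid\tilde s)P(s\mid\tilde s,\tilde a)$ for $s\in\mathcal S_h$, $h>0$, and $\rho_\pi(s,a)=\rho_\pi(s)\pi(a\mid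 s)$. $\mathcal D$ is a set of trajectories in $M$; the dataset-induced MDP $M_{\mathcal D}$ has the same spaces and horizon with $P^{M_{\mathcal D}}(s'\mid s,a)=N(s,a,s')/N(s,a)$ and $R^{M_{\mathcal D}}(r\mid s,a)=N(s,a,r)/N(s,a)$ when $N(s,a)>0$ and $0$ otherwise ($N$ counts occurrences in $\mathcal D$). $\pi$ is batch-constrained if $\pi(a\mid s)=0$ whenever $(s,a)$ does not appear in $\mathcal D$. *)

theory Defs
  imports Complex_Main
begin

text \<open>A transition kernel is P s a s', a reward kernel is R s a r (probability of reward r),
  layer s is the timestep index h of the layer S_h containing s.\<close>

definition is_mdp ::
  "nat \<Rightarrow> ('s::finite \<Rightarrow> nat) \<Rightarrow> 's \<Rightarrow> real set \<Rightarrow>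
   ('s \<Rightarrow> 'a::finite \<Rightarrow> 's \<Rightarrow> real) \<Rightarrow> ('s \<Rightarrow> 'a \<Rightarrow> real \<Rightarrow> real) \<Rightarrow> bool" where
  "is_mdp H layer s0 Rw P R \<longleftrightarrow>
     0 < H \<and> layer s0 = 0 \<and> (\<forall>s. layer s < H) \<and>
     finite Rw \<and> Rw \<subseteq> {0..1} \<and>
     (\<forall>s a s'. 0 \<le> P s a s') \<and> (\<forall>s a. (\<Sum>s'\<in>UNIV. P s a s') = 1) \<and>
     (\<forall>s a s'. 0 < P s a s' \<and> layer s + 1 < H \<longrightarrow> layer s' = layer s + 1) \<and>
     (\<forall>s a r. 0 \<le> R s a r) \<and> (\<forall>s a r. r \<notin> Rw \<longrightarrow> R s a r = 0) \<and>
     (\<forall>s a. (\<Sum>r\<in>Rw. R s a r) = 1)"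

definition is_policy :: "('s::finite \<Rightarrow> 'a::finite \<Rightarrow> real) \<Rightarrow> bool" where
  "is_policy \<pi> \<longleftrightarrow> (\<forall>s a. 0 \<le> \<pi> s a) \<and> (\<forall>s. (\<Sum>a\<in>UNIV. \<pi> s a) = 1)"

definition mean_reward :: "real set \<Rightarrow> ('s \<Rightarrow> 'a \<Rightarrow> real \<Rightarrow> real) \<Rightarrow> 's \<Rightarrow> 'a \<Rightarrow> real" where
  "mean_reward Rw R s a = (\<Sum>r\<in>Rw. r * R s a r)"

fun value_fn :: "real set \<Rightarrow> ('s::finite \<Rightarrow> 'a::finite \<Rightarrow> 's \<Rightarrow> real) \<Rightarrow> ('s \<Rightarrow> 'a \<Rightarrow> real \<Rightarrow> real)
     \<Rightarrow> ('s \<Rightarrow> 'a \<Rightarrow> real) \<Rightarrow> nat \<Rightarrow> 's \<Rightarrow> real" where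
  "value_fn Rw P R \<pi> 0 s = 0"
| "value_fn Rw P R \<pi> (Suc n) s =
     (\<Sum>a\<in>UNIV. \<pi> s a * (mean_reward Rw R s a + (\<Sum>s'\<in>UNIV. P s a s' * value_fn Rw P R \<pi> n s')))"

definition J :: "nat \<Rightarrow> 's::finite \<Rightarrow> real set \<Rightarrow> ('s \<Rightarrow> 'a::finite \<Rightarrow> 's \<Rightarrow> real)
     \<Rightarrow> ('s \<Rightarrow> 'a \<Rightarrow> real \<Rightarrow> real) \<Rightarrow> ('s \<Rightarrow> 'a \<Rightarrow> real) \<Rightarrow> real" where
  "J H s0 Rw P R \<pi> = value_fn Rw P R \<pi> H s0"

fun rho_layer :: "nat \<Rightarrow> ('s::finite \<Rightarrow> nat) \<Rightarrow> 's \<Rightarrow> ('s \<Rightarrow> 'a::finite \<Rightarrow> 's \<Rightarrow> real)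
     \<Rightarrow> ('s \<Rightarrow> 'a \<Rightarrow> real) \<Rightarrow> nat \<Rightarrow> 's \<Rightarrow> real" where
  "rho_layer H layer s0 P \<pi> 0 s = (if s = s0 then 1 / real H else 0)"
| "rho_layer H layer s0 P \<pi> (Suc h) s =
     (\<Sum>t\<in>{t. layer t = h}. \<Sum>b\<in>UNIV. rho_layer H layer s0 P \<pi> h t * \<pi> t b * P t b s)"

definition rho :: "nat \<Rightarrow> ('s::finite \<Rightarrow> nat) \<Rightarrow> 's \<Rightarrow> ('s \<Rightarrow> 'a::finite \<Rightarrow> 's \<Rightarrow> real)
     \<Rightarrow> ('s \<Rightarrow> 'a \<Rightarrow> real) \<Rightarrow> 's \<Rightarrow> real" where
  "rho H layer s0 P \<pi> s = rho_layer H layer s0 P \<pi> (layer s) s"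

definition rho_sa :: "nat \<Rightarrow> ('s::finite \<Rightarrow> nat) \<Rightarrow> 's \<Rightarrow> ('s \<Rightarrow> 'a::finite \<Rightarrow> 's \<Rightarrow> real)
     \<Rightarrow> ('s \<Rightarrow> 'a \<Rightarrow> real) \<Rightarrow> 's \<Rightarrow> 'a \<Rightarrow> real" where
  "rho_sa H layer s0 P \<pi> s a = rho H layer s0 P \<pi> s * \<pi> s a"

type_synonym ('s, 'a) traj = "('s \<times> 'a \<times> real \<times> 's) list"

definition traj_in_mdp :: "('s \<Rightarrow> 'a \<Rightarrow> 's \<Rightarrow> real) \<Rightarrow> ('s \<Rightarrow> 'a \<Rightarrow> real \<Rightarrow> real)
     \<Rightarrow> ('s, 'a) traj \<Rightarrow> bool" where
  "traj_in_mdp P R \<tau> \<longleftrightarrow>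
     (\<forall>(s, a, r, s') \<in> set \<tau>. 0 < P s a s' \<and> 0 < R s a r) \<and>
     (\<forall>i. Suc i < length \<tau> \<longrightarrow> fst (\<tau> ! Suc i) = snd (snd (snd (\<tau> ! i))))"

definition N_sa :: "('s, 'a) traj list \<Rightarrow> 's \<Rightarrow> 'a \<Rightarrow> nat" where
  "N_sa D s a = sum_list (map (\<lambda>\<tau>. length (filter (\<lambda>(s1, a1, r1, t1). s1 = s \<and> a1 = a) \<tau>)) D)"

definition N_sas :: "('s, 'a) traj list \<Rightarrow> 's \<Rightarrow> 'a \<Rightarrow> 's \<Rightarrow> nat" where
  "N_sas D s a s' = sum_list (map (\<lambda>\<tau>. length (filter (\<lambda>(s1, a1, r1, t1). s1 = s \<and> a1 = a \<and> t1 = s') \<tau>)) D)"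

definition N_sar :: "('s, 'a) traj list \<Rightarrow> 's \<Rightarrow> 'a \<Rightarrow> real \<Rightarrow> nat" where
  "N_sar D s a r = sum_list (map (\<lambda>\<tau>. length (filter (\<lambda>(s1, a1, r1, t1). s1 = s \<and> a1 = a \<and> r1 = r) \<tau>)) D)"

definition P_data :: "('s, 'a) traj list \<Rightarrow> 's \<Rightarrow> 'a \<Rightarrow> 's \<Rightarrow> real" where
  "P_data D s a s' = (if N_sa D s a > 0 then real (N_sas D s a s') / real (N_sa D s a) else 0)"

definition R_data :: "('s, 'a) traj list \<Rightarrow> 's \<Rightarrow> 'a \<Rightarrow> real \<Rightarrow> real" where
  "R_data D s a r = (if N_sa D s a > 0 then real (N_sar D s a r) / real (N_sa D s a) else 0)"

definition batch_constrained :: "('s, 'a) traj list \<Rightarrow> ('s \<Rightarrow> 'a \<Rightarrow> real) \<Rightarrow> bool" where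
  "batch_constrained D \<pi> \<longleftrightarrow>
     (\<forall>s a. (\<not> (\<exists>\<tau>\<in>set D. \<exists>(s1, a1, r1, t1)\<in>set \<tau>. s1 = s \<and> a1 = a)) \<longrightarrow> \<pi> s a = 0)"

end

theory Submission
  imports Defs
begin

text \<open>Let \<open>d\<^sub>h\<close> be the law of the state at step \<open>h\<close> when \<open>\<pi>\<close> runs in the dataset MDP, and
  \<open>V\<^sup>D\<^sub>n\<close>, \<open>V\<^sup>M\<^sub>n\<close> the \<open>n\<close>-step values of \<open>\<pi>\<close> in the two MDPs. By the Bellman equations,
  \<open>V\<^sup>D\<^sub>n\<^sub>+\<^sub>1 - V\<^sup>M\<^sub>n\<^sub>+\<^sub>1 = \<pi> (r\<^sup>D - r\<^sup>M + (P\<^sup>D - P\<^sup>M) V\<^sup>M\<^sub>n) + \<pi> P\<^sup>D (V\<^sup>D\<^sub>n - V\<^sup>M\<^sub>n)\<close>, and averaging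
  the last term against \<open>d\<^sub>h\<close> gives the same comparison against \<open>d\<^sub>h\<^sub>+\<^sub>1\<close>. Telescoping over
  \<open>h = 0, \<dots>, H - 1\<close>, the error paid at step \<open>h\<close> only involves pairs visited with positive
  probability, where it is at most \<open>\<epsilon>\<^sub>r + \<epsilon>\<^sub>P (H - h - 1) r\<^sub>m\<^sub>a\<^sub>x\<close> because
  \<open>0 \<le> V\<^sup>M\<^sub>n \<le> n r\<^sub>m\<^sub>a\<^sub>x\<close>; summing over \<open>h\<close> gives the bound.
  The empirical kernel vanishes at unseen pairs, so it is only substochastic.\<close>

definition substochastic :: "('s::finite \<Rightarrow> 'a \<Rightarrow> 's \<Rightarrow> real) \<Rightarrow> bool" where
  "substochastic Q \<longleftrightarrow> (\<forall>s a s'. 0 \<le> Q s a s') \<and> (\<forall>s a. (\<Sum>s'\<in>UNIV. Q s a s') \<le> 1)"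

definition layered :: "nat \<Rightarrow> ('s \<Rightarrow> nat) \<Rightarrow> ('s \<Rightarrow> 'a \<Rightarrow> 's \<Rightarrow> real) \<Rightarrow> bool" where
  "layered H layer Q \<longleftrightarrow> (\<forall>s a s'. Q s a s' \<noteq> 0 \<and> layer s + 1 < H \<longrightarrow> layer s' = layer s + 1)"

text \<open>This is \<open>d\<^sub>h\<close>; unlike \<^const>\<open>rho_layer\<close>, it is neither normalised by \<open>H\<close> nor
  restricted to a layer.\<close>

fun state_dist ::
  "('s::finite \<Rightarrow> 'a::finite \<Rightarrow> 's \<Rightarrow> real) \<Rightarrow> ('s \<Rightarrow> 'a \<Rightarrow> real) \<Rightarrow> 's \<Rightarrow> nat \<Rightarrow> 's \<Rightarrow> real" where
  "state_dist Q \<pi> s0 0 s = (if s = s0 then 1 else 0)"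
| "state_dist Q \<pi> s0 (Suc h) s = (\<Sum>t\<in>UNIV. \<Sum>b\<in>UNIV. state_dist Q \<pi> s0 h t * \<pi> t b * Q t b s)"

lemma sum_length_filter_eq_length_filter:
  "(\<Sum>y\<in>(UNIV::'b::finite set). length (filter (\<lambda>x. Q x \<and> f x = y) xs)) = length (filter Q xs)"
proof (induction xs)
  case (Cons x xs)
  have "length (filter P (x # xs)) = (if P x then 1 else 0) + length (filter P xs)" for P
    by simp
  then show ?case
    using Cons.IH by (simp only: sum.distrib) (simp add: sum.If_cases)
qed simp

lemma sum_N_sas_eq_N_sa: "(\<Sum>s'\<in>UNIV. N_sas D s a (s'::'s::finite)) = N_sa D s a"
proof (induction D)
  case (Cons \<tau> D)
  have "(\<Sum>s'\<in>UNIV. length (filter (\<lambda>(s1, a1, r1, t1). s1 = s \<and> a1 = a \<and> t1 = s') \<tau>))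
      = length (filter (\<lambda>(s1, a1, r1, t1). s1 = s \<and> a1 = a) \<tau>)"
    using sum_length_filter_eq_length_filter
      [of "\<lambda>(s1, a1, r1, t1). s1 = s \<and> a1 = a" "\<lambda>x. snd (snd (snd x))" \<tau>]
    by (simp add: case_prod_unfold)
  with Cons.IH show ?case
    by (simp add: N_sas_def N_sa_def sum.distrib)
qed (simp_all add: N_sas_def N_sa_def)

lemma substochastic_P_data: "substochastic (P_data D)"
  unfolding substochastic_def
proof (intro conjI allI)
  fix s a
  show "(\<Sum>s'\<in>UNIV. P_data D s a s') \<le> 1"
  proof (cases "N_sa D s a > 0")
    case True
    then have "(\<Sum>s'\<in>UNIV. P_data D s a s') = real (\<Sum>s'\<in>UNIV. N_sas D s a s') / real (N_sa D s a)"
      by (simp add: P_data_def sum_divide_distrib)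
    with True show ?thesis
      by (simp add: sum_N_sas_eq_N_sa)
  qed (simp add: P_data_def)
qed (simp add: P_data_def)

lemma P_data_nonzero_imp_pos:
  assumes "\<forall>\<tau>\<in>set D. traj_in_mdp P R \<tau>" and "P_data D s a s' \<noteq> 0"
  shows "0 < P s a s'"
proof -
  from assms(2) have "N_sas D s a s' \<noteq> 0"
    by (simp add: P_data_def split: if_splits)
  then obtain \<tau> where \<tau>: "\<tau> \<in> set D"
    and "filter (\<lambda>(s1, a1, r1, t1). s1 = s \<and> a1 = a \<and> t1 = s') \<tau> \<noteq> []"
    unfolding N_sas_def by (auto simp: sum_list_eq_0_iff)
  then obtain r where "(s, a, r, s') \<in> set \<tau>"
    by (fastforce simp: filter_empty_conv)
  with assms(1) \<tau> show ?thesis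
    unfolding traj_in_mdp_def by fastforce
qed

lemma layered_P_data:
  assumes "is_mdp H layer s0 Rw P R" and "\<forall>\<tau>\<in>set D. traj_in_mdp P R \<tau>"
  shows "layered H layer (P_data D)"
  unfolding layered_def
proof (intro allI impI)
  fix s a s'
  assume "P_data D s a s' \<noteq> 0 \<and> layer s + 1 < H"
  moreover from this have "0 < P s a s'"
    using P_data_nonzero_imp_pos[OF assms(2)] by blast
  ultimately show "layer s' = layer s + 1"
    using assms(1) unfolding is_mdp_def by blast
qed

lemma state_dist_nonneg:
  assumes "substochastic Q" and "is_policy \<pi>"
  shows "0 \<le> state_dist Q \<pi> s0 h s"
  using assms unfolding substochastic_def is_policy_def
  by (induction h arbitrary: s) (auto intro!: sum_nonneg)

lemma sum_state_dist_Suc: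
  "(\<Sum>s\<in>UNIV. state_dist Q \<pi> s0 h s * (\<Sum>a\<in>UNIV. \<pi> s a * (\<Sum>s'\<in>UNIV. Q s a s' * f s')))
   = (\<Sum>s'\<in>UNIV. state_dist Q \<pi> s0 (Suc h) s' * f s')"
proof -
  have "(\<Sum>s\<in>UNIV. state_dist Q \<pi> s0 h s * (\<Sum>a\<in>UNIV. \<pi> s a * (\<Sum>s'\<in>UNIV. Q s a s' * f s')))
      = (\<Sum>s\<in>UNIV. \<Sum>a\<in>UNIV. \<Sum>s'\<in>UNIV. state_dist Q \<pi> s0 h s * \<pi> s a * Q s a s' * f s')"
    by (simp add: sum_distrib_left mult.assoc)
  also have "\<dots> = (\<Sum>s'\<in>UNIV. \<Sum>s\<in>UNIV. \<Sum>a\<in>UNIV. state_dist Q \<pi> s0 h s * \<pi> s a * Q s a s' * f s')"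
    by (subst sum.swap) (rule sum.cong[OF refl], rule sum.swap)
  finally show ?thesis
    by (simp add: sum_distrib_right)
qed

lemma sum_state_dist_le_1:
  assumes "substochastic Q" and "is_policy \<pi>"
  shows "(\<Sum>s\<in>UNIV. state_dist Q \<pi> s0 h s) \<le> 1"
proof (induction h)
  case (Suc h)
  have "(\<Sum>s\<in>UNIV. state_dist Q \<pi> s0 (Suc h) s)
      = (\<Sum>s\<in>UNIV. state_dist Q \<pi> s0 h s * (\<Sum>a\<in>UNIV. \<pi> s a * (\<Sum>s'\<in>UNIV. Q s a s' * 1)))"
    using sum_state_dist_Suc[of Q \<pi> s0 h "\<lambda>_. 1"] by simp
  also have "\<dots> \<le> (\<Sum>s\<in>UNIV. state_dist Q \<pi> s0 h s * (\<Sum>a\<in>UNIV. \<pi> s a * 1))"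
    using assms state_dist_nonneg[OF assms] unfolding substochastic_def is_policy_def
    by (intro sum_mono mult_left_mono) auto
  also have "\<dots> \<le> 1"
    using assms(2) Suc.IH unfolding is_policy_def by simp
  finally show ?case .
qed simp

lemma state_dist_nonzero_imp_layer:
  assumes "layer s0 = 0" and "layered H layer Q"
  shows "h < H \<Longrightarrow> state_dist Q \<pi> s0 h s \<noteq> 0 \<Longrightarrow> layer s = h"
proof (induction h arbitrary: s)
  case 0
  with assms(1) show ?case
    by (simp split: if_splits)
next
  case (Suc h)
  obtain t b where "state_dist Q \<pi> s0 h t * \<pi> t b * Q t b s \<noteq> 0"
    using Suc.prems(2) by (auto elim!: sum.not_neutral_contains_not_neutral)
  then have "layer t = h" and "Q t b s \<noteq> 0"
    using Suc by auto
  with Suc.prems(1) assms(2) show ?case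
    unfolding layered_def by auto
qed

lemma rho_layer_eq_state_dist:
  assumes "layer s0 = 0" and "layered H layer Q"
  shows "h < H \<Longrightarrow> rho_layer H layer s0 Q \<pi> h s = state_dist Q \<pi> s0 h s / real H"
proof (induction h arbitrary: s)
  case (Suc h)
  have "rho_layer H layer s0 Q \<pi> (Suc h) s
      = (\<Sum>t\<in>{t. layer t = h}. \<Sum>b\<in>UNIV. state_dist Q \<pi> s0 h t * \<pi> t b * Q t b s) / real H"
    using Suc by (simp add: sum_divide_distrib)
  also have "\<dots> = (\<Sum>t\<in>UNIV. \<Sum>b\<in>UNIV. state_dist Q \<pi> s0 h t * \<pi> t b * Q t b s) / real H"
    using state_dist_nonzero_imp_layer[OF assms, of h] Suc.prems
    by (intro arg_cong[where f = "\<lambda>x. x / real H"] sum.mono_neutral_left)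
      (auto elim!: sum.not_neutral_contains_not_neutral)
  finally show ?case
    by simp
qed simp

lemma rho_sa_pos:
  assumes "layer s0 = 0" and "layered H layer Q"
    and "h < H" and "0 < state_dist Q \<pi> s0 h s" and "0 < \<pi> s a"
  shows "0 < rho_sa H layer s0 Q \<pi> s a"
proof -
  have "state_dist Q \<pi> s0 h s \<noteq> 0"
    using assms(4) by simp
  then have "layer s = h"
    using state_dist_nonzero_imp_layer[OF assms(1-3)] by blast
  with assms show ?thesis
    by (simp add: rho_sa_def rho_def rho_layer_eq_state_dist)
qed

lemma abs_sum_mult_le:
  fixes w v :: "'a \<Rightarrow> 'b::linordered_idom"
  assumes "\<And>x. x \<in> A \<Longrightarrow> w x \<noteq> 0 \<Longrightarrow> \<bar>v x\<bar> \<le> c"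
  shows "\<bar>\<Sum>x\<in>A. w x * v x\<bar> \<le> (\<Sum>x\<in>A. \<bar>w x\<bar>) * c"
proof -
  have "\<bar>\<Sum>x\<in>A. w x * v x\<bar> \<le> (\<Sum>x\<in>A. \<bar>w x\<bar> * \<bar>v x\<bar>)"
    using sum_abs[of "\<lambda>x. w x * v x" A] by (simp add: abs_mult)
  also have "\<dots> \<le> (\<Sum>x\<in>A. \<bar>w x\<bar> * c)"
  proof (rule sum_mono)
    fix x
    assume "x \<in> A"
    then show "\<bar>w x\<bar> * \<bar>v x\<bar> \<le> \<bar>w x\<bar> * c"
      using assms by (cases "w x = 0") (simp_all add: mult_left_mono)
  qed
  finally show ?thesis
    by (simp add: sum_distrib_right)
qed

lemma is_policy_ex_pos:
  assumes "is_policy \<pi>"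
  obtains a where "0 < \<pi> s a"
proof -
  have "\<not> (\<forall>a. \<pi> s a = 0)"
    using assms unfolding is_policy_def by (metis sum.neutral zero_neq_one)
  then show ?thesis
    using assms that unfolding is_policy_def by (metis less_eq_real_def)
qed

lemma mean_reward_nonneg:
  assumes "Rw \<subseteq> {0..}" and "\<And>r. 0 \<le> R s a r"
  shows "0 \<le> mean_reward Rw R s a"
  using assms unfolding mean_reward_def by (auto intro!: sum_nonneg)

lemma value_fn_bounded:
  assumes "substochastic P" and "is_policy \<pi>"
    and "\<And>s a. 0 \<le> mean_reward Rw R s a" and "\<And>s a. mean_reward Rw R s a \<le> r_max"
  shows "0 \<le> value_fn Rw P R \<pi> n s \<and> value_fn Rw P R \<pi> n s \<le> real n * r_max"
proof (induction n arbitrary: s)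
  case (Suc n)
  have "0 \<le> r_max"
    using assms(3,4) by (rule order_trans)
  have "(\<Sum>s'\<in>UNIV. P s a s' * value_fn Rw P R \<pi> n s') \<le> real n * r_max" for a
  proof -
    have "(\<Sum>s'\<in>UNIV. P s a s' * value_fn Rw P R \<pi> n s') \<le> (\<Sum>s'\<in>UNIV. P s a s') * (real n * r_max)"
      using assms(1) Suc.IH unfolding substochastic_def sum_distrib_right
      by (intro sum_mono mult_left_mono) auto
    also have "\<dots> \<le> real n * r_max"
      using assms(1) \<open>0 \<le> r_max\<close> unfolding substochastic_def
      by (intro mult_left_le_one_le sum_nonneg) auto
    finally show ?thesis .
  qed
  then have "value_fn Rw P R \<pi> (Suc n) s \<le> (\<Sum>a\<in>UNIV. \<pi> s a * (r_max + real n * r_max))"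
    using assms(2,4) unfolding value_fn.simps is_policy_def
    by (intro sum_mono mult_left_mono add_mono) auto
  also have "\<dots> = (\<Sum>a\<in>UNIV. \<pi> s a) * (r_max + real n * r_max)"
    by (simp add: sum_distrib_right)
  also have "\<dots> = real (Suc n) * r_max"
    using assms(2) unfolding is_policy_def by (simp add: algebra_simps)
  finally have "value_fn Rw P R \<pi> (Suc n) s \<le> real (Suc n) * r_max" .
  moreover have "0 \<le> value_fn Rw P R \<pi> (Suc n) s"
    using assms(1-3) Suc.IH unfolding value_fn.simps substochastic_def is_policy_def
    by (intro sum_nonneg mult_nonneg_nonneg add_nonneg_nonneg) auto
  ultimately show ?case
    by simp
qed simp

lemma value_fn_Suc_diff:
  "value_fn Rw Q RQ \<pi> (Suc n) s - value_fn Rw P RP \<pi> (Suc n) s =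
     (\<Sum>a\<in>UNIV. \<pi> s a * (mean_reward Rw RQ s a - mean_reward Rw RP s a
        + (\<Sum>s'\<in>UNIV. (Q s a s' - P s a s') * value_fn Rw P RP \<pi> n s')))
   + (\<Sum>a\<in>UNIV. \<pi> s a * (\<Sum>s'\<in>UNIV. Q s a s' * (value_fn Rw Q RQ \<pi> n s' - value_fn Rw P RP \<pi> n s')))"
  by (simp add: algebra_simps sum.distrib sum_subtractf sum_distrib_left)

context
  fixes Q P :: "'s::finite \<Rightarrow> 'a::finite \<Rightarrow> 's \<Rightarrow> real" and \<pi> :: "'s \<Rightarrow> 'a \<Rightarrow> real"
    and Rw :: "real set" and RQ RP :: "'s \<Rightarrow> 'a \<Rightarrow> real \<Rightarrow> real"
    and H :: nat and s0 :: 's and r_max eps_r eps_P :: real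
  assumes Q: "substochastic Q" and P: "substochastic P" and \<pi>: "is_policy \<pi>"
    and rP_nonneg: "\<And>s a. 0 \<le> mean_reward Rw RP s a"
    and rP_le: "\<And>s a. mean_reward Rw RP s a \<le> r_max"
    and err_r: "\<And>h s a. h < H \<Longrightarrow> 0 < state_dist Q \<pi> s0 h s \<Longrightarrow> 0 < \<pi> s a \<Longrightarrow>
      \<bar>mean_reward Rw RQ s a - mean_reward Rw RP s a\<bar> \<le> eps_r"
    and err_P: "\<And>h s a. h < H \<Longrightarrow> 0 < state_dist Q \<pi> s0 h s \<Longrightarrow> 0 < \<pi> s a \<Longrightarrow>
      (\<Sum>s'\<in>UNIV. \<bar>Q s a s' - P s a s'\<bar>) \<le> eps_P"
begin

lemma sum_state_dist_value_fn_diff_le: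
  assumes "0 \<le> eps_r" and "0 \<le> eps_P"
  shows "h + n \<le> H \<Longrightarrow>
    \<bar>\<Sum>s\<in>UNIV. state_dist Q \<pi> s0 h s * (value_fn Rw Q RQ \<pi> n s - value_fn Rw P RP \<pi> n s)\<bar>
      \<le> real n * eps_r + real n * (real n - 1) * r_max / 2 * eps_P"
proof (induction n arbitrary: h)
  case (Suc n)
  let ?d = "state_dist Q \<pi> s0"
  let ?VQ = "value_fn Rw Q RQ \<pi>" and ?VP = "value_fn Rw P RP \<pi>"
  define err where "err s a = mean_reward Rw RQ s a - mean_reward Rw RP s a
    + (\<Sum>s'\<in>UNIV. (Q s a s' - P s a s') * ?VP n s')" for s a
  have "0 \<le> r_max"
    using rP_nonneg rP_le by (rule order_trans)
  have err_le: "\<bar>err s a\<bar> \<le> eps_r + eps_P * (real n * r_max)" if "0 < ?d h s" "0 < \<pi> s a" for s a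
  proof -
    have "\<bar>\<Sum>s'\<in>UNIV. (Q s a s' - P s a s') * ?VP n s'\<bar> \<le> (\<Sum>s'\<in>UNIV. \<bar>Q s a s' - P s a s'\<bar>) * (real n * r_max)"
      using value_fn_bounded[OF P \<pi> rP_nonneg rP_le] by (intro abs_sum_mult_le) auto
    also have "\<dots> \<le> eps_P * (real n * r_max)"
      using err_P[of h s a] Suc.prems that \<open>0 \<le> r_max\<close> by (intro mult_right_mono) auto
    finally show ?thesis
      using err_r[of h s a] Suc.prems that unfolding err_def by linarith
  qed
  have step_error: "\<bar>\<Sum>s\<in>UNIV. ?d h s * (\<Sum>a\<in>UNIV. \<pi> s a * err s a)\<bar> \<le> eps_r + eps_P * (real n * r_max)"
  proof -
    have "\<bar>\<Sum>a\<in>UNIV. \<pi> s a * err s a\<bar> \<le> eps_r + eps_P * (real n * r_max)" if "0 < ?d h s" for s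
      using abs_sum_mult_le[of UNIV "\<pi> s" "err s"] err_le[OF that] \<pi>
      unfolding is_policy_def by (simp add: order.strict_iff_order)
    then have "\<bar>\<Sum>s\<in>UNIV. ?d h s * (\<Sum>a\<in>UNIV. \<pi> s a * err s a)\<bar>
        \<le> (\<Sum>s\<in>UNIV. ?d h s) * (eps_r + eps_P * (real n * r_max))"
      using abs_sum_mult_le[of UNIV "?d h"] state_dist_nonneg[OF Q \<pi>]
      by (simp add: order.strict_iff_order)
    also have "\<dots> \<le> eps_r + eps_P * (real n * r_max)"
      using sum_state_dist_le_1[OF Q \<pi>] assms \<open>0 \<le> r_max\<close>
      by (intro mult_left_le_one_le sum_nonneg state_dist_nonneg[OF Q \<pi>]) auto
    finally show ?thesis .
  qed
  have telescoping_step: "(\<Sum>s\<in>UNIV. ?d h s * (?VQ (Suc n) s - ?VP (Suc n) s))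
      = (\<Sum>s\<in>UNIV. ?d h s * (\<Sum>a\<in>UNIV. \<pi> s a * err s a))
        + (\<Sum>s\<in>UNIV. ?d (Suc h) s * (?VQ n s - ?VP n s))"
    unfolding value_fn_Suc_diff err_def distrib_left sum.distrib sum_state_dist_Suc ..
  have "\<bar>\<Sum>s\<in>UNIV. ?d (Suc h) s * (?VQ n s - ?VP n s)\<bar>
      \<le> real n * eps_r + real n * (real n - 1) * r_max / 2 * eps_P"
    using Suc.prems by (intro Suc.IH) simp
  with step_error have "\<bar>\<Sum>s\<in>UNIV. ?d h s * (?VQ (Suc n) s - ?VP (Suc n) s)\<bar>
      \<le> (eps_r + eps_P * (real n * r_max)) + (real n * eps_r + real n * (real n - 1) * r_max / 2 * eps_P)"
    unfolding telescoping_step by (intro order_trans[OF abs_triangle_ineq add_mono])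
  also have "\<dots> = real (Suc n) * eps_r + real (Suc n) * (real (Suc n) - 1) * r_max / 2 * eps_P"
    by (simp add: field_simps)
  finally show ?case .
qed simp

lemma simulation_lemma:
  "\<bar>value_fn Rw Q RQ \<pi> H s0 - value_fn Rw P RP \<pi> H s0\<bar>
    \<le> real H * eps_r + real H * (real H - 1) * r_max / 2 * eps_P"
proof (cases "H = 0")
  case False
  obtain a0 where "0 < \<pi> s0 a0"
    using \<pi> by (rule is_policy_ex_pos)
  then have "0 \<le> eps_r" and "0 \<le> eps_P"
    using err_r[of 0 s0 a0] err_P[of 0 s0 a0] False
    by (auto intro: order_trans[OF abs_ge_zero] order_trans[OF sum_nonneg])
  from sum_state_dist_value_fn_diff_le[OF this, of 0 H] show ?thesis
    by (simp add: of_bool_def[symmetric])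
qed simp

end

theorem lemma2:
  fixes H :: nat and layer :: "'s::finite \<Rightarrow> nat" and s0 :: 's and Rw :: "real set"
    and P :: "'s \<Rightarrow> 'a::finite \<Rightarrow> 's \<Rightarrow> real" and R :: "'s \<Rightarrow> 'a \<Rightarrow> real \<Rightarrow> real"
    and D :: "('s, 'a) traj list" and \<pi> :: "'s \<Rightarrow> 'a \<Rightarrow> real"
    and eps_P eps_r r_max :: real
  assumes mdp: "is_mdp H layer s0 Rw P R"
    and data: "\<forall>\<tau>\<in>set D. traj_in_mdp P R \<tau>"
    and pol: "is_policy \<pi>"
    and bc: "batch_constrained D \<pi>"
    and hP: "\<forall>s a. rho_sa H layer s0 (P_data D) \<pi> s a > 0 \<longrightarrow>
               (\<Sum>s'\<in>UNIV. \<bar>P_data D s a s' - P s a s'\<bar>) \<le> eps_P"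
    and hr: "\<forall>s a. rho_sa H layer s0 (P_data D) \<pi> s a > 0 \<longrightarrow>
               \<bar>mean_reward Rw (R_data D) s a - mean_reward Rw R s a\<bar> \<le> eps_r"
    and hmax: "\<forall>s a. max (mean_reward Rw (R_data D) s a) (mean_reward Rw R s a) \<le> r_max"
  shows "\<bar>J H s0 Rw (P_data D) (R_data D) \<pi> - J H s0 Rw P R \<pi>\<bar>
           \<le> real H * eps_r + real H * (real H - 1) * r_max / 2 * eps_P"
proof -
  have s0: "layer s0 = 0" and P: "substochastic P" and "Rw \<subseteq> {0..}" and "\<And>s a r. 0 \<le> R s a r"
    using mdp unfolding is_mdp_def substochastic_def by auto
  have visited: "0 < rho_sa H layer s0 (P_data D) \<pi> s a"
    if "h < H" "0 < state_dist (P_data D) \<pi> s0 h s" "0 < \<pi> s a" for h s a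
    using rho_sa_pos[OF s0 layered_P_data[OF mdp data] that] .
  have "\<bar>value_fn Rw (P_data D) (R_data D) \<pi> H s0 - value_fn Rw P R \<pi> H s0\<bar>
      \<le> real H * eps_r + real H * (real H - 1) * r_max / 2 * eps_P"
  proof (rule simulation_lemma[OF substochastic_P_data P pol])
    show "0 \<le> mean_reward Rw R s a" for s a
      by (rule mean_reward_nonneg) fact+
    show "mean_reward Rw R s a \<le> r_max" for s a
      using hmax by simp
    show "\<bar>mean_reward Rw (R_data D) s a - mean_reward Rw R s a\<bar> \<le> eps_r"
      if "h < H" "0 < state_dist (P_data D) \<pi> s0 h s" "0 < \<pi> s a" for h s a
      using hr visited[OF that] by blast
    show "(\<Sum>s'\<in>UNIV. \<bar>P_data D s a s' - P s a s'\<bar>) \<le> eps_P"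
      if "h < H" "0 < state_dist (P_data D) \<pi> s0 h s" "0 < \<pi> s a" for h s a
      using hP visited[OF that] by blast
  qed
  then show ?thesis
    unfolding J_def .
qed

end
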